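(* Let $V$ be a $(\mathfrak g,K)$-module and let $v\in V_{h,p,p}$ be a minimal vector. Then: (i) $2(p+1)Z_{32}v=-Z_{12}Z_{31}v$ and $2(p+1)Z_{13}v=Z_{12}Z_{23}v$; (ii) $S^{-3}_{-1}S^3_1v-(p+1)S^3_{-1}S^{-3}_1v=\frac12(p-h)(p+1)v$; (iii) $Cv=\bigl(\frac13h^2+p^2+2h+2p\bigr)v+4\frac{p+2}{p+1}S^{-3}_{-1}S^3_1v$; (iv) $\Delta_3v=\frac19h(h+3p+12)(h-3p+6)v+2\frac{(p+2)(h-3p+6)}{p+1}S^{-3}_{-1}S^3_1v$.
   Context: $G=\mathrm{SU}(2,1)$ (the matrices $g\in\mathrm{SL}_3(\mathbb C)$ with $\bar g^t\,\mathrm{diag}(1,1,-1)\,g=\mathrm{diag}(1,1,-1)$), $\mathfrak g$ its Lie algebra, complexification identified with $\mathfrak{sl}_3(\mathbb C)$; $E_{ij}$ matrix units. $K=\{k(\eta,\alpha,\beta)=\begin{pmatrix}\eta\alpha&\eta\beta&0\\-\eta\bar\beta&\eta\bar\alpha&0\\0&0&\eta^{-2}\end{pmatrix}\}$; its irreducible representations $\tau^h_p$ ($p\ge0$, $h\equiv p\bmod2$): $\tau^h_p(k(\eta,\alpha,\beta))=\eta^{-h}\tau_p\begin{pmatrix}\alpha&\beta\\-\bar\beta&\bar\alpha\end{pmatrix}$. In a $(\mathfrak g,K)$-module $V$: $V_{h,p}$ is the $\tau^h_p$-isotypic part and $V_{h,p,p}=\{v\in V_{h,p}:W_0v=-ipv\}$.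 Elements: $\mathrm{CK}_i=\mathrm{diag}(i,i,-2i)$, $W_0=\mathrm{diag}(i,-i,0)$, $Z_{12}=2E_{12}$, $Z_{21}=-2E_{21}$, $Z_{13}=E_{13}$, $Z_{31}=E_{31}$, $Z_{23}=E_{23}$, $Z_{32}=E_{32}$. Shift operators on $V_{h,p,p}$: $S^3_1=Z_{31}$, $S^{-3}_1=Z_{23}$, $S^3_{-1}=Z_{32}+\frac1{2(p+1)}Z_{12}Z_{31}$, $S^{-3}_{-1}=Z_{13}-\frac1{2(p+1)}Z_{12}Z_{23}$ (applied on $V_{h\pm3,p+1,p+1}$ with $p+1$ in place of $p$). A minimal vector is a nonzero $v\in V_{h,p,p}$ with $S^3_{-1}v=S^{-3}_{-1}v=0$. Central elements of $U(\mathfrak g)$: $C=-\frac13\mathrm{CK}_i^2+2i\,\mathrm{CK}_i-W_0^2+2iW_0-Z_{12}Z_{21}+4Z_{13}Z_{31}+4Z_{23}Z_{32}$ and $\Delta_3=-\frac i9\mathrm{CK}_i^3+i\,\mathrm{CK}_iW_0^2+iZ_{12}\mathrm{CK}_iZ_{21}+2iZ_{13}\mathrm{CK}_iZ_{31}-6iZ_{13}W_0Z_{31}-6Z_{13}Z_{21}Z_{32}+2iZ_{23}\mathrm{CK}_iZ_{32}+6iZ_{23}W_0Z_{32}+6Z_{23}Z_{12}Z_{31}-2\mathrm{CK}_i^2+2\mathrm{CK}_iW_0+24Z_{13}Z_{31}+24Z_{23}Z_{32}+8i\,\mathrm{CK}_i$. *)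

theory Defs
  imports "HOL-Analysis.Analysis"
begin

type_synonym cmat = "complex^3^3"

definition Emat :: "3 \<Rightarrow> 3 \<Rightarrow> cmat" where
  "Emat i j = (\<chi> a b. if a = i \<and> b = j then 1 else 0)"

definition diag3 :: "complex \<Rightarrow> complex \<Rightarrow> complex \<Rightarrow> cmat" where
  "diag3 x y z = (\<chi> a b. if a = b then (if a = 1 then x else if a = 2 then y else z) else 0)"

definition cscale :: "complex \<Rightarrow> cmat \<Rightarrow> cmat" where
  "cscale c X = (\<chi> a b. c * X$a$b)"

definition ctrans :: "cmat \<Rightarrow> cmat" where
  "ctrans X = (\<chi> a b. cnj (X$b$a))"

definition sl3 :: "cmat set" where
  "sl3 = {X. trace X = 0}"

definition CKi :: cmat where "CKi = diag3 \<i> \<i> (-2*\<i>)"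
definition W0 :: cmat where "W0 = diag3 \<i> (-\<i>) 0"
definition Z12 :: cmat where "Z12 = cscale 2 (Emat 1 2)"
definition Z21 :: cmat where "Z21 = cscale (-2) (Emat 2 1)"
definition Z13 :: cmat where "Z13 = Emat 1 3"
definition Z31 :: cmat where "Z31 = Emat 3 1"
definition Z23 :: cmat where "Z23 = Emat 2 3"
definition Z32 :: cmat where "Z32 = Emat 3 2"

definition kmat :: "complex \<Rightarrow> complex \<Rightarrow> complex \<Rightarrow> cmat" where
  "kmat \<eta> \<alpha> \<beta> = (\<chi> a b.
     if a = 1 \<and> b = 1 then \<eta> * \<alpha> else
     if a = 1 \<and> b = 2 then \<eta> * \<beta> else
     if a = 2 \<and> b = 1 then - \<eta> * cnj \<beta> else
     if a = 2 \<and> b = 2 then \<eta> * cnj \<alpha> else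
     if a = 3 \<and> b = 3 then inverse (\<eta>^2) else 0)"

definition Kpar :: "(complex \<times> complex \<times> complex) set" where
  "Kpar = {(\<eta>, \<alpha>, \<beta>). cmod \<eta> = 1 \<and> (cmod \<alpha>)^2 + (cmod \<beta>)^2 = 1}"

definition Kgrp :: "cmat set" where
  "Kgrp = (\<lambda>(\<eta>, \<alpha>, \<beta>). kmat \<eta> \<alpha> \<beta>) ` Kpar"

text \<open>Four one-parameter subgroups of K whose tangent vectors
  CK_i, W_0, E12 - E21, i(E12 + E21) form a real basis of the Lie algebra of K.\<close>
definition kcurve :: "nat \<Rightarrow> real \<Rightarrow> cmat" where
  "kcurve n t = (if n = 0 then kmat (cis t) 1 0
                 else if n = 1 then kmat 1 (cis t) 0
                 else if n = 2 then kmat 1 (complex_of_real (cos t)) (complex_of_real (sin t))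
                 else kmat 1 (complex_of_real (cos t)) (\<i> * complex_of_real (sin t)))"

definition ktangent :: "nat \<Rightarrow> cmat" where
  "ktangent n = (if n = 0 then CKi else if n = 1 then W0
                 else if n = 2 then Emat 1 2 - Emat 2 1
                 else cscale \<i> (Emat 1 2 + Emat 2 1))"

text \<open>tau_p = Sym^p of the standard representation of SU(2), realised on
  coefficient vectors f (f j = coefficient of e1^(p-j) e2^j, f j = 0 for j > p);
  g e1 = a e1 + c e2, g e2 = b e1 + d e2 for g = [[a,b],[c,d]].\<close>
definition Pspace :: "nat \<Rightarrow> (nat \<Rightarrow> complex) set" where
  "Pspace p = {f. \<forall>j>p. f j = 0}"

definition tau :: "nat \<Rightarrow> complex \<Rightarrow> complex \<Rightarrow> complex \<Rightarrow> complex
                   \<Rightarrow> (nat \<Rightarrow> complex) \<Rightarrow> (nat \<Rightarrow> complex)" where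
  "tau p a b c d f = (\<lambda>m. if m \<le> p then
     (\<Sum>j\<le>p. (\<Sum>r\<le>p - j. \<Sum>s\<le>j. if r + s = m then
        of_nat ((p - j) choose r) * of_nat (j choose s) * a^(p - j - r) * c^r * b^(j - s) * d^s
        else 0) * f j)
     else 0)"

definition tauh :: "int \<Rightarrow> nat \<Rightarrow> complex \<Rightarrow> complex \<Rightarrow> complex
                    \<Rightarrow> (nat \<Rightarrow> complex) \<Rightarrow> (nat \<Rightarrow> complex)" where
  "tauh h p \<eta> \<alpha> \<beta> f = (\<lambda>m. \<eta> powi (-h) * tau p \<alpha> \<beta> (- cnj \<beta>) (cnj \<alpha>) f m)"

text \<open>V is a complex vector space (carrier type 'v with scalar multiplication sc),
  rho the action of g_C = sl_3(C), piK the action of K.\<close>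
definition gK_module ::
  "(complex \<Rightarrow> 'v::ab_group_add \<Rightarrow> 'v) \<Rightarrow> (cmat \<Rightarrow> 'v \<Rightarrow> 'v) \<Rightarrow> (cmat \<Rightarrow> 'v \<Rightarrow> 'v) \<Rightarrow> bool" where
  "gK_module sc rho piK \<longleftrightarrow>
     vector_space sc \<and>
     \<comment> \<open>Lie algebra representation of sl_3(C)\<close>
     (\<forall>X\<in>sl3. Vector_Spaces.linear sc sc (rho X)) \<and>
     (\<forall>X\<in>sl3. \<forall>Y\<in>sl3. \<forall>w. rho (X + Y) w = rho X w + rho Y w) \<and>
     (\<forall>X\<in>sl3. \<forall>c w. rho (cscale c X) w = sc c (rho X w)) \<and>
     (\<forall>X\<in>sl3. \<forall>Y\<in>sl3. \<forall>w. rho (X ** Y - Y ** X) w = rho X (rho Y w) - rho Y (rho X w)) \<and>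
     \<comment> \<open>group representation of K\<close>
     (\<forall>k\<in>Kgrp. Vector_Spaces.linear sc sc (piK k)) \<and>
     (\<forall>w. piK (mat 1) w = w) \<and>
     (\<forall>k1\<in>Kgrp. \<forall>k2\<in>Kgrp. \<forall>w. piK (k1 ** k2) w = piK k1 (piK k2 w)) \<and>
     \<comment> \<open>compatibility with Ad\<close>
     (\<forall>k\<in>Kgrp. \<forall>X\<in>sl3. \<forall>w. piK k (rho X w) = rho (k ** X ** ctrans k) (piK k w)) \<and>
     \<comment> \<open>K-finiteness, continuity on finite-dimensional K-stable subspaces,
         and the derivative of piK on the Lie algebra of K equals rho\<close>
     (\<forall>v. \<exists>B. finite B \<and> \<not> module.dependent sc B \<and> v \<in> module.span sc B \<and>
        (\<forall>k\<in>Kgrp. piK k ` module.span sc B \<subseteq> module.span sc B) \<and>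
        (\<forall>w\<in>module.span sc B. \<exists>c :: cmat \<Rightarrow> 'v \<Rightarrow> complex.
            (\<forall>k\<in>Kgrp. piK k w = (\<Sum>b\<in>B. sc (c k b) b)) \<and>
            (\<forall>b\<in>B. continuous_on Kgrp (\<lambda>k. c k b)) \<and>
            (\<forall>n<4. \<exists>d :: 'v \<Rightarrow> complex.
               (\<forall>b\<in>B. ((\<lambda>t. c (kcurve n t) b) has_vector_derivative d b) (at 0)) \<and>
               rho (ktangent n) w = (\<Sum>b\<in>B. sc (d b) b))))"

definition tau_copy ::
  "(complex \<Rightarrow> 'v::ab_group_add \<Rightarrow> 'v) \<Rightarrow> (cmat \<Rightarrow> 'v \<Rightarrow> 'v) \<Rightarrow> int \<Rightarrow> nat \<Rightarrow> 'v set \<Rightarrow> bool" where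
  "tau_copy sc piK h p U \<longleftrightarrow>
     (\<exists>\<phi> :: (nat \<Rightarrow> complex) \<Rightarrow> 'v.
        bij_betw \<phi> (Pspace p) U \<and>
        (\<forall>f\<in>Pspace p. \<forall>g\<in>Pspace p. \<phi> (\<lambda>j. f j + g j) = \<phi> f + \<phi> g) \<and>
        (\<forall>f\<in>Pspace p. \<forall>c. \<phi> (\<lambda>j. c * f j) = sc c (\<phi> f)) \<and>
        (\<forall>(\<eta>, \<alpha>, \<beta>)\<in>Kpar. \<forall>f\<in>Pspace p.
            \<phi> (tauh h p \<eta> \<alpha> \<beta> f) = piK (kmat \<eta> \<alpha> \<beta>) (\<phi> f)))"

definition Viso :: "(complex \<Rightarrow> 'v::ab_group_add \<Rightarrow> 'v) \<Rightarrow> (cmat \<Rightarrow> 'v \<Rightarrow> 'v) \<Rightarrow> int \<Rightarrow> nat \<Rightarrow> 'v set" where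
  "Viso sc piK h p = module.span sc (\<Union> {U. tau_copy sc piK h p U})"

definition Vhpp :: "(complex \<Rightarrow> 'v::ab_group_add \<Rightarrow> 'v) \<Rightarrow> (cmat \<Rightarrow> 'v \<Rightarrow> 'v) \<Rightarrow> (cmat \<Rightarrow> 'v \<Rightarrow> 'v)
                    \<Rightarrow> int \<Rightarrow> nat \<Rightarrow> 'v set" where
  "Vhpp sc rho piK h p = {v \<in> Viso sc piK h p. rho W0 v = sc (- \<i> * of_nat p) v}"

section \<open>Shift operators (p is the K-type parameter of the space they act on)\<close>

definition S3p1 :: "(cmat \<Rightarrow> 'v \<Rightarrow> 'v) \<Rightarrow> 'v \<Rightarrow> 'v" where
  "S3p1 rho w = rho Z31 w"
definition Sm3p1 :: "(cmat \<Rightarrow> 'v \<Rightarrow> 'v) \<Rightarrow> 'v \<Rightarrow> 'v" where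
  "Sm3p1 rho w = rho Z23 w"
definition S3m1 :: "(complex \<Rightarrow> 'v::ab_group_add \<Rightarrow> 'v) \<Rightarrow> (cmat \<Rightarrow> 'v \<Rightarrow> 'v) \<Rightarrow> nat \<Rightarrow> 'v \<Rightarrow> 'v" where
  "S3m1 sc rho p w = rho Z32 w + sc (1 / (2 * (of_nat p + 1))) (rho Z12 (rho Z31 w))"
definition Sm3m1 :: "(complex \<Rightarrow> 'v::ab_group_add \<Rightarrow> 'v) \<Rightarrow> (cmat \<Rightarrow> 'v \<Rightarrow> 'v) \<Rightarrow> nat \<Rightarrow> 'v \<Rightarrow> 'v" where
  "Sm3m1 sc rho p w = rho Z13 w - sc (1 / (2 * (of_nat p + 1))) (rho Z12 (rho Z23 w))"

definition minimal_vector ::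
  "(complex \<Rightarrow> 'v::ab_group_add \<Rightarrow> 'v) \<Rightarrow> (cmat \<Rightarrow> 'v \<Rightarrow> 'v) \<Rightarrow> (cmat \<Rightarrow> 'v \<Rightarrow> 'v)
   \<Rightarrow> int \<Rightarrow> nat \<Rightarrow> 'v \<Rightarrow> bool" where
  "minimal_vector sc rho piK h p v \<longleftrightarrow>
     v \<noteq> 0 \<and> v \<in> Vhpp sc rho piK h p \<and> S3m1 sc rho p v = 0 \<and> Sm3m1 sc rho p v = 0"

definition Cop :: "(complex \<Rightarrow> 'v::ab_group_add \<Rightarrow> 'v) \<Rightarrow> (cmat \<Rightarrow> 'v \<Rightarrow> 'v) \<Rightarrow> 'v \<Rightarrow> 'v" where
  "Cop sc rho v =
      sc (-1/3) (rho CKi (rho CKi v)) + sc (2*\<i>) (rho CKi v)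
    - rho W0 (rho W0 v) + sc (2*\<i>) (rho W0 v)
    - rho Z12 (rho Z21 v) + sc 4 (rho Z13 (rho Z31 v)) + sc 4 (rho Z23 (rho Z32 v))"

definition Delta3 :: "(complex \<Rightarrow> 'v::ab_group_add \<Rightarrow> 'v) \<Rightarrow> (cmat \<Rightarrow> 'v \<Rightarrow> 'v) \<Rightarrow> 'v \<Rightarrow> 'v" where
  "Delta3 sc rho v =
      sc (-\<i>/9) (rho CKi (rho CKi (rho CKi v)))
    + sc \<i> (rho CKi (rho W0 (rho W0 v)))
    + sc \<i> (rho Z12 (rho CKi (rho Z21 v)))
    + sc (2*\<i>) (rho Z13 (rho CKi (rho Z31 v)))
    - sc (6*\<i>) (rho Z13 (rho W0 (rho Z31 v)))
    - sc 6 (rho Z13 (rho Z21 (rho Z32 v)))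
    + sc (2*\<i>) (rho Z23 (rho CKi (rho Z32 v)))
    + sc (6*\<i>) (rho Z23 (rho W0 (rho Z32 v)))
    + sc 6 (rho Z23 (rho Z12 (rho Z31 v)))
    - sc 2 (rho CKi (rho CKi v))
    + sc 2 (rho CKi (rho W0 v))
    + sc 24 (rho Z13 (rho Z31 v))
    + sc 24 (rho Z23 (rho Z32 v))
    + sc (8*\<i>) (rho CKi v)"

end

(*
  Restricted to V_{h,p}, the Lie algebra of K acts through tau^h_p: differentiating the K-action
  along one-parameter subgroups shows that CK_i acts by the scalar -ih, that W_0 acts on the
  monomial basis with eigenvalues i(p-2m), 0 <= m <= p, and that Z21 maps V_{h,p} into itself.
  Since [W_0, Z21] = -2i Z21, the vector Z21 v would have W_0-eigenvalue -i(p+2), which does not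
  occur on V_{h,p}; hence Z21 v = 0.

  Everything else is computation in U(g): the two minimality equations are (i), and commuting
  the remaining operators past each other writes both sides of (ii)-(iv) as combinations of v,
  Z13 Z31 v and Z12 Z23 Z31 v, whose coefficients agree.
*)

theory Submission
  imports Defs
begin

section \<open>Commutation relations in sl_3(C)\<close>

lemma trace_cmat: "trace (X::cmat) = X$1$1 + X$2$2 + X$3$3"
  by (simp add: trace_def sum_3)

lemmas generator_defs =
  CKi_def W0_def Z12_def Z21_def Z13_def Z31_def Z23_def Z32_def Emat_def diag3_def cscale_def

lemma generators_sl3 [simp]:
  "CKi \<in> sl3" "W0 \<in> sl3" "Z12 \<in> sl3" "Z21 \<in> sl3" "Z13 \<in> sl3" "Z31 \<in> sl3" "Z23 \<in> sl3" "Z32 \<in> sl3"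
  by (simp_all add: sl3_def trace_cmat generator_defs)

lemma cscale_sl3 [simp]: "X \<in> sl3 \<Longrightarrow> cscale c X \<in> sl3"
  by (simp add: sl3_def trace_cmat cscale_def) (metis distrib_left mult_zero_right)

lemma ktangent_sl3 [simp]: "ktangent n \<in> sl3"
  by (simp add: ktangent_def sl3_def trace_cmat generator_defs)

lemma cmat_eq_iff: "(X::cmat) = Y \<longleftrightarrow> (\<forall>i j. X$i$j = Y$i$j)"
  by (simp add: vec_eq_iff)

lemma commutator_Z23_Z12: "Z23 ** Z12 - Z12 ** Z23 = cscale (-2) Z13"
  and commutator_Z32_Z23: "Z32 ** Z23 - Z23 ** Z32 = cscale (\<i>/2) CKi + cscale (-\<i>/2) W0"
  and commutator_Z31_Z23: "Z31 ** Z23 - Z23 ** Z31 = cscale (1/2) Z21"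
  and commutator_CKi_Z31: "CKi ** Z31 - Z31 ** CKi = cscale (-3*\<i>) Z31"
  and commutator_W0_Z31: "W0 ** Z31 - Z31 ** W0 = cscale (-\<i>) Z31"
  and commutator_Z21_Z32: "Z21 ** Z32 - Z32 ** Z21 = cscale 2 Z31"
  and commutator_CKi_Z32: "CKi ** Z32 - Z32 ** CKi = cscale (-3*\<i>) Z32"
  and commutator_W0_Z32: "W0 ** Z32 - Z32 ** W0 = cscale \<i> Z32"
  and commutator_W0_Z21: "W0 ** Z21 - Z21 ** W0 = cscale (-2*\<i>) Z21"
  by (simp_all add: cmat_eq_iff forall_3 matrix_matrix_mult_def sum_3 generator_defs)

lemma Z21_eq_ktangent: "Z21 = ktangent 2 + cscale \<i> (ktangent 3)"
  by (simp add: cmat_eq_iff forall_3 ktangent_def generator_defs)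

section \<open>Lie algebra computations at a minimal vector\<close>

definition comb3 :: "('a \<Rightarrow> 'b \<Rightarrow> 'b) \<Rightarrow> 'b \<times> 'b \<times> 'b \<Rightarrow> 'a \<Rightarrow> 'a \<Rightarrow> 'a \<Rightarrow> 'b::ab_group_add" where
  "comb3 s T a b c = s a (fst T) + s b (fst (snd T)) + s c (snd (snd T))"

context vector_space
begin

lemma comb3_add: "comb3 scale T a b c + comb3 scale T a' b' c' = comb3 scale T (a + a') (b + b') (c + c')"
  by (simp only: comb3_def scale_left_distrib add_ac)

lemma comb3_neg: "- comb3 scale T a b c = comb3 scale T (- a) (- b) (- c)"
  by (simp only: comb3_def scale_minus_left minus_add_distrib add_ac)

lemma comb3_diff: "comb3 scale T a b c - comb3 scale T a' b' c' = comb3 scale T (a - a') (b - b') (c - c')"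
  by (simp only: diff_conv_add_uminus comb3_neg comb3_add)

lemma comb3_scale: "scale k (comb3 scale T a b c) = comb3 scale T (k * a) (k * b) (k * c)"
  by (simp add: comb3_def scale_right_distrib)

end

locale sl3_rep =
  fixes sc :: "complex \<Rightarrow> 'v::ab_group_add \<Rightarrow> 'v" and rho :: "cmat \<Rightarrow> 'v \<Rightarrow> 'v"
  assumes vector_space: "vector_space sc"
    and rho_linear: "X \<in> sl3 \<Longrightarrow> Vector_Spaces.linear sc sc (rho X)"
    and rho_plus: "X \<in> sl3 \<Longrightarrow> Y \<in> sl3 \<Longrightarrow> rho (X + Y) w = rho X w + rho Y w"
    and rho_cscale: "X \<in> sl3 \<Longrightarrow> rho (cscale c X) w = sc c (rho X w)"
    and rho_commutator:
      "X \<in> sl3 \<Longrightarrow> Y \<in> sl3 \<Longrightarrow> rho (X ** Y - Y ** X) w = rho X (rho Y w) - rho Y (rho X w)"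
begin

sublocale V: vector_space sc by (rule vector_space)

sublocale Vpair: vector_space_pair sc sc ..

lemma rho_add: "X \<in> sl3 \<Longrightarrow> rho X (w + u) = rho X w + rho X u"
  using rho_linear[of X] by (simp add: Vector_Spaces.linear_iff)

lemma rho_scale: "X \<in> sl3 \<Longrightarrow> rho X (sc c w) = sc c (rho X w)"
  using rho_linear[of X] by (simp add: Vector_Spaces.linear_iff)

lemma rho_zero: "X \<in> sl3 \<Longrightarrow> rho X 0 = 0"
  using rho_scale[of X 0 0] by simp

lemma rho_neg: "X \<in> sl3 \<Longrightarrow> rho X (- w) = - rho X w"
  using rho_scale[of X "-1" w] by (simp add: V.scale_minus_left)

lemma rho_swap:
  assumes "X \<in> sl3" "Y \<in> sl3" "Z \<in> sl3" "X ** Y - Y ** X = cscale c Z"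
  shows "rho X (rho Y w) = rho Y (rho X w) + sc c (rho Z w)"
  using rho_commutator[of X Y w] rho_cscale[of Z c w] assms by simp

lemma rho_eigen_shift:
  assumes "X \<in> sl3" "Y \<in> sl3" "X ** Y - Y ** X = cscale c Y" "rho X w = sc \<mu> w"
  shows "rho X (rho Y w) = sc (\<mu> + c) (rho Y w)"
  using rho_swap[of X Y Y c w] rho_scale[of Y \<mu> w] assms by (simp add: V.scale_left_distrib)

lemma rho_Z23_Z12: "rho Z23 (rho Z12 w) = rho Z12 (rho Z23 w) + sc (-2) (rho Z13 w)"
  by (rule rho_swap[OF _ _ _ commutator_Z23_Z12]) simp_all

lemma rho_Z32_Z23:
  "rho Z32 (rho Z23 w) = rho Z23 (rho Z32 w) + (sc (\<i>/2) (rho CKi w) + sc (-\<i>/2) (rho W0 w))"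
  using rho_commutator[of Z32 Z23 w] by (simp add: commutator_Z32_Z23 rho_plus rho_cscale)

end

lemma complex_nonzero_if_Re_pos: "0 < Re z \<Longrightarrow> z \<noteq> 0"
  by auto

locale minimal_weight_vector = sl3_rep sc rho
  for sc :: "complex \<Rightarrow> 'v::ab_group_add \<Rightarrow> 'v" and rho +
  fixes h :: int and p :: nat and v :: 'v
  assumes CKi_v: "rho CKi v = sc (- \<i> * of_int h) v"
    and W0_v: "rho W0 v = sc (- \<i> * of_nat p) v"
    and Z21_v: "rho Z21 v = 0"
    and S3m1_v: "S3m1 sc rho p v = 0"
    and Sm3m1_v: "Sm3m1 sc rho p v = 0"
begin

lemma Z32_v: "rho Z32 v = - sc (1 / (2 * (of_nat p + 1))) (rho Z12 (rho Z31 v))"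
  using S3m1_v unfolding S3m1_def by (simp add: eq_neg_iff_add_eq_0)

lemma Z13_v: "rho Z13 v = sc (1 / (2 * (of_nat p + 1))) (rho Z12 (rho Z23 v))"
  using Sm3m1_v unfolding Sm3m1_def by simp

lemma Z32_v_relation: "sc (2 * (of_nat p + 1)) (rho Z32 v) = - rho Z12 (rho Z31 v)"
  by (simp add: Z32_v V.scale_minus_right complex_nonzero_if_Re_pos)

lemma Z13_v_relation: "sc (2 * (of_nat p + 1)) (rho Z13 v) = rho Z12 (rho Z23 v)"
  by (simp add: Z13_v complex_nonzero_if_Re_pos)

lemma Z31_Z23_v: "rho Z31 (rho Z23 v) = rho Z23 (rho Z31 v)"
  using rho_swap[OF _ _ _ commutator_Z31_Z23, of v] by (simp add: Z21_v)

lemma Z21_Z32_v: "rho Z21 (rho Z32 v) = sc 2 (rho Z31 v)"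
  using rho_swap[OF _ _ _ commutator_Z21_Z32, of v] by (simp add: Z21_v rho_zero)

lemma CKi_Z31_v: "rho CKi (rho Z31 v) = sc (- \<i> * of_int h + - 3 * \<i>) (rho Z31 v)"
  by (rule rho_eigen_shift[OF _ _ commutator_CKi_Z31 CKi_v]) simp_all

lemma W0_Z31_v: "rho W0 (rho Z31 v) = sc (- \<i> * of_nat p + - \<i>) (rho Z31 v)"
  by (rule rho_eigen_shift[OF _ _ commutator_W0_Z31 W0_v]) simp_all

lemma CKi_Z32_v: "rho CKi (rho Z32 v) = sc (- \<i> * of_int h + - 3 * \<i>) (rho Z32 v)"
  by (rule rho_eigen_shift[OF _ _ commutator_CKi_Z32 CKi_v]) simp_all

lemma W0_Z32_v: "rho W0 (rho Z32 v) = sc (- \<i> * of_nat p + \<i>) (rho Z32 v)"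
  by (rule rho_eigen_shift[OF _ _ commutator_W0_Z32 W0_v]) simp_all

lemma Z23_Z32_v:
  "rho Z23 (rho Z32 v) = sc (1 / (of_nat p + 1)) (rho Z13 (rho Z31 v))
     - sc (1 / (2 * (of_nat p + 1))) (rho Z12 (rho Z23 (rho Z31 v)))"
proof -
  have "2 / (2 * (of_nat p + 1)) = (1 / (of_nat p + 1) :: complex)"
    by (simp add: divide_simps complex_nonzero_if_Re_pos)
  then show ?thesis
    by (simp add: Z32_v rho_neg rho_scale rho_Z23_Z12 V.scale_right_diff_distrib V.scale_scale)
qed

lemmas action_on_v =
  CKi_v W0_v Z21_v Z31_Z23_v Z21_Z32_v CKi_Z31_v W0_Z31_v CKi_Z32_v W0_Z32_v Z23_Z32_v
  rho_Z23_Z12 rho_Z32_Z23 rho_scale rho_add rho_zero generators_sl3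

text \<open>Every vector occurring below is a combination of \<open>v\<close>, \<open>Z13 Z31 v\<close> and \<open>Z12 Z23 Z31 v\<close>;
  rewriting it into coordinates with respect to this frame reduces each identity to three
  identities between scalars.  The frame need not be independent.  Since \<open>v\<close> occurs inside
  the other two frame vectors, these are rewritten into coordinates first.\<close>

lemma coordinate_frame:
  obtains T where "v = comb3 sc T 1 0 0" "rho Z13 (rho Z31 v) = comb3 sc T 0 1 0"
    "rho Z12 (rho Z23 (rho Z31 v)) = comb3 sc T 0 0 1"
  by (rule that[of "(v, rho Z13 (rho Z31 v), rho Z12 (rho Z23 (rho Z31 v)))"]) (simp_all add: comb3_def)

lemmas comb3_rules =
  V.comb3_add V.comb3_diff V.comb3_neg V.comb3_scale add_0_left add_0_right diff_zero minus_zero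

lemma shift_operator_relation:
  "Sm3m1 sc rho (p + 1) (S3p1 rho v) - sc (of_nat p + 1) (S3m1 sc rho (p + 1) (Sm3p1 rho v))
     = sc ((of_nat p - of_int h) * (of_nat p + 1) / 2) v"
proof -
  obtain T where v: "v = comb3 sc T 1 0 0" and A: "rho Z13 (rho Z31 v) = comb3 sc T 0 1 0"
    and X: "rho Z12 (rho Z23 (rho Z31 v)) = comb3 sc T 0 0 1"
    by (rule coordinate_frame)
  show ?thesis
    unfolding S3p1_def Sm3p1_def S3m1_def Sm3m1_def
    apply (simp only: action_on_v V.scale_scale V.scale_zero_right)
    apply (simp only: A X)
    apply (simp only: v comb3_rules)
    apply (intro arg_cong3[where f = "comb3 sc T"])
      apply (simp_all add: divide_simps complex_nonzero_if_Re_pos)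
     apply (simp_all add: algebra_simps power2_eq_square)
    done
qed

lemma Cop_minimal_vector:
  "Cop sc rho v = sc ((of_int h)^2 / 3 + (of_nat p)^2 + 2 * of_int h + 2 * of_nat p) v
     + sc (4 * (of_nat p + 2) / (of_nat p + 1)) (Sm3m1 sc rho (p + 1) (S3p1 rho v))"
proof -
  obtain T where v: "v = comb3 sc T 1 0 0" and A: "rho Z13 (rho Z31 v) = comb3 sc T 0 1 0"
    and X: "rho Z12 (rho Z23 (rho Z31 v)) = comb3 sc T 0 0 1"
    by (rule coordinate_frame)
  show ?thesis
    unfolding Cop_def S3p1_def Sm3m1_def
    apply (simp only: action_on_v V.scale_scale V.scale_zero_right)
    apply (simp only: A X)
    apply (simp only: v comb3_rules)
    apply (intro arg_cong3[where f = "comb3 sc T"])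
      apply (simp_all add: divide_simps complex_nonzero_if_Re_pos)
     apply (simp_all add: algebra_simps power2_eq_square)
    done
qed

lemma Delta3_minimal_vector:
  "Delta3 sc rho v = sc (of_int h * (of_int h + 3 * of_nat p + 12) * (of_int h - 3 * of_nat p + 6) / 9) v
     + sc (2 * (of_nat p + 2) * (of_int h - 3 * of_nat p + 6) / (of_nat p + 1))
         (Sm3m1 sc rho (p + 1) (S3p1 rho v))"
proof -
  obtain T where v: "v = comb3 sc T 1 0 0" and A: "rho Z13 (rho Z31 v) = comb3 sc T 0 1 0"
    and X: "rho Z12 (rho Z23 (rho Z31 v)) = comb3 sc T 0 0 1"
    by (rule coordinate_frame)
  show ?thesis
    unfolding Delta3_def S3p1_def Sm3m1_def
    apply (simp only: action_on_v V.scale_scale V.scale_zero_right)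
    apply (simp only: A X)
    apply (simp only: v comb3_rules)
    apply (intro arg_cong3[where f = "comb3 sc T"])
      apply (simp_all add: divide_simps complex_nonzero_if_Re_pos)
     apply (simp_all add: algebra_simps power2_eq_square)
    done
qed

end

section \<open>Differentiating the K-action\<close>

context vector_space
begin

lemma representation_sum_scale:
  assumes "independent B" "span B = UNIV"
  shows "representation B (\<Sum>i\<in>I. scale (a i) (x i)) b = (\<Sum>i\<in>I. a i * representation B (x i) b)"
  using assms by (simp add: representation_sum representation_scale)

lemma representation_sum_basis:
  assumes "independent B" "span B = UNIV" "A \<subseteq> B" "finite A"
  shows "representation B (\<Sum>a\<in>A. scale (f a) a) b = (if b \<in> A then f b else 0)"
proof -
  have "representation B (\<Sum>a\<in>A. scale (f a) a) b = (\<Sum>a\<in>A. f a * representation B a b)"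
    by (rule representation_sum_scale[OF assms(1,2)])
  also have "\<dots> = (\<Sum>a\<in>A. if a = b then f a else 0)"
    using assms(1,3) by (intro sum.cong refl) (auto simp: representation_basis)
  finally show ?thesis
    using assms(4) by (simp add: sum.delta)
qed

lemma representation_inject:
  assumes "independent B" "span B = UNIV" "representation B x = representation B y"
  shows "x = y"
  by (metis assms sum_nonzero_representation_eq UNIV_I)

end

lemma kmat_in_Kgrp: "(\<eta>, \<alpha>, \<beta>) \<in> Kpar \<Longrightarrow> kmat \<eta> \<alpha> \<beta> \<in> Kgrp"
  unfolding Kgrp_def by (rule image_eqI[where x="(\<eta>, \<alpha>, \<beta>)"]) simp_all

lemma kcurve_in_Kgrp: "kcurve n t \<in> Kgrp"
  by (simp add: kcurve_def kmat_in_Kgrp Kpar_def norm_mult)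

locale gK_rep =
  fixes sc :: "complex \<Rightarrow> 'v::ab_group_add \<Rightarrow> 'v" and rho piK :: "cmat \<Rightarrow> 'v \<Rightarrow> 'v"
  assumes gK_module: "gK_module sc rho piK"
begin

sublocale sl3_rep sc rho
  using gK_module unfolding gK_module_def sl3_rep_def by (elim conjE) (intro conjI allI impI; blast)

lemma K_finite:
  "\<exists>B. finite B \<and> V.independent B \<and> w \<in> V.span B \<and>
     (\<forall>k\<in>Kgrp. piK k ` V.span B \<subseteq> V.span B) \<and>
     (\<forall>w\<in>V.span B. \<exists>c :: cmat \<Rightarrow> 'v \<Rightarrow> complex.
        (\<forall>k\<in>Kgrp. piK k w = (\<Sum>b\<in>B. sc (c k b) b)) \<and>
        (\<forall>b\<in>B. continuous_on Kgrp (\<lambda>k. c k b)) \<and>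
        (\<forall>n<4. \<exists>d :: 'v \<Rightarrow> complex.
           (\<forall>b\<in>B. ((\<lambda>t. c (kcurve n t) b) has_vector_derivative d b) (at 0)) \<and>
           rho (ktangent n) w = (\<Sum>b\<in>B. sc (d b) b)))"
  using gK_module unfolding gK_module_def by (elim conjE allE)

lemma K_finite_expansion:
  assumes "n < 4"
  obtains B c d where "finite B" "V.independent B"
    "\<And>k. k \<in> Kgrp \<Longrightarrow> piK k w = (\<Sum>b\<in>B. sc (c k b) b)"
    "\<And>b. b \<in> B \<Longrightarrow> ((\<lambda>t. c (kcurve n t) b) has_vector_derivative d b) (at 0)"
    "rho (ktangent n) w = (\<Sum>b\<in>B. sc (d b) b)"
proof -
  obtain B where B: "finite B" "V.independent B" "w \<in> V.span B"
    and expansion: "\<forall>w\<in>V.span B. \<exists>c.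
        (\<forall>k\<in>Kgrp. piK k w = (\<Sum>b\<in>B. sc (c k b) b)) \<and>
        (\<forall>b\<in>B. continuous_on Kgrp (\<lambda>k. c k b)) \<and>
        (\<forall>n<4. \<exists>d. (\<forall>b\<in>B. ((\<lambda>t. c (kcurve n t) b) has_vector_derivative d b) (at 0)) \<and>
           rho (ktangent n) w = (\<Sum>b\<in>B. sc (d b) b))"
    using K_finite[of w] by blast
  then obtain c d where "\<forall>k\<in>Kgrp. piK k w = (\<Sum>b\<in>B. sc (c k b) b)"
    "\<forall>b\<in>B. ((\<lambda>t. c (kcurve n t) b) has_vector_derivative d b) (at 0)"
    "rho (ktangent n) w = (\<Sum>b\<in>B. sc (d b) b)"
    using assms by blast
  with B show thesis
    by (intro that) auto
qed

text \<open>The K-finiteness axiom expands the K-orbit of \<open>w\<close> in some independent set \<open>B\<close>; the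
  coordinate functionals of a basis extending \<open>B\<close> transfer the derivative at \<open>t = 0\<close> to any other
  finite expansion of the orbit.\<close>

lemma rho_ktangent_derivative:
  assumes "n < 4" "finite M"
    and orbit: "\<And>t. piK (kcurve n t) w = (\<Sum>m\<in>M. sc (g t m) (e m))"
    and g': "\<And>m. m \<in> M \<Longrightarrow> ((\<lambda>t. g t m) has_vector_derivative g' m) (at 0)"
  shows "rho (ktangent n) w = (\<Sum>m\<in>M. sc (g' m) (e m))"
proof -
  obtain B c d where B: "finite B" "V.independent B"
    and c: "\<And>k. k \<in> Kgrp \<Longrightarrow> piK k w = (\<Sum>b\<in>B. sc (c k b) b)"
    and d: "\<And>b. b \<in> B \<Longrightarrow> ((\<lambda>t. c (kcurve n t) b) has_vector_derivative d b) (at 0)"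
    and rho_w: "rho (ktangent n) w = (\<Sum>b\<in>B. sc (d b) b)"
    using K_finite_expansion[OF \<open>n < 4\<close>, where w = w] by blast
  define Bf where "Bf = V.extend_basis B"
  have Bf: "V.independent Bf" "V.span Bf = UNIV" "B \<subseteq> Bf"
    using B(2) by (simp_all add: Bf_def V.independent_extend_basis V.extend_basis_superset)
  note coord_comb = V.representation_sum_scale[OF Bf(1,2)]
  note coord_basis = V.representation_sum_basis[OF Bf B(1)]
  have "V.representation Bf (rho (ktangent n) w) b0 = V.representation Bf (\<Sum>m\<in>M. sc (g' m) (e m)) b0"
    for b0
  proof -
    have same_coordinate: "(\<lambda>t. if b0 \<in> B then c (kcurve n t) b0 else 0)
        = (\<lambda>t. \<Sum>m\<in>M. g t m * V.representation Bf (e m) b0)"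
    proof
      fix t
      have "V.representation Bf (piK (kcurve n t) w) b0 = (if b0 \<in> B then c (kcurve n t) b0 else 0)"
        by (simp only: c[OF kcurve_in_Kgrp] coord_basis)
      moreover have "V.representation Bf (piK (kcurve n t) w) b0
          = (\<Sum>m\<in>M. g t m * V.representation Bf (e m) b0)"
        by (simp only: orbit coord_comb)
      ultimately show "(if b0 \<in> B then c (kcurve n t) b0 else 0)
          = (\<Sum>m\<in>M. g t m * V.representation Bf (e m) b0)"
        by simp
    qed
    have "((\<lambda>t. if b0 \<in> B then c (kcurve n t) b0 else 0)
        has_vector_derivative (if b0 \<in> B then d b0 else 0)) (at 0)"
      using d by (cases "b0 \<in> B") auto
    moreover have "((\<lambda>t. \<Sum>m\<in>M. g t m * V.representation Bf (e m) b0)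
        has_vector_derivative (\<Sum>m\<in>M. g' m * V.representation Bf (e m) b0)) (at 0)"
      by (intro has_vector_derivative_sum has_vector_derivative_mult_left g')
    ultimately have "(if b0 \<in> B then d b0 else 0) = (\<Sum>m\<in>M. g' m * V.representation Bf (e m) b0)"
      unfolding same_coordinate by (rule vector_derivative_unique_at)
    then show ?thesis
      by (simp only: rho_w coord_basis) (simp only: coord_comb)
  qed
  then show ?thesis
    using V.representation_inject[OF Bf(1,2)] by blast
qed

end

section \<open>The K-types tau^h_p\<close>

lemma tau_diagonal: "tau p a 0 0 d f m = (if m \<le> p then a ^ (p - m) * d ^ m * f m else 0)"
proof (cases "m \<le> p")
  case True
  have coefficient: "(\<Sum>r\<le>p - j. \<Sum>s\<le>j. if r + s = m then
        of_nat ((p - j) choose r) * of_nat (j choose s) * a ^ (p - j - r) * 0 ^ r * 0 ^ (j - s) * d ^ s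
        else 0) = (if j = m then a ^ (p - m) * d ^ m else 0)" if "j \<le> p" for j
  proof -
    have "(\<Sum>r\<le>p - j. \<Sum>s\<le>j. if r + s = m then
        of_nat ((p - j) choose r) * of_nat (j choose s) * a ^ (p - j - r) * 0 ^ r * 0 ^ (j - s) * d ^ s
        else 0) = (\<Sum>r\<le>p - j. \<Sum>s\<le>j. if r = 0 \<and> s = j \<and> j = m then a ^ (p - j) * d ^ j else 0)"
      by (intro sum.cong refl) (auto simp: power_0_left)
    also have "\<dots> = (\<Sum>r\<le>p - j. if r = 0 \<and> j = m then a ^ (p - j) * d ^ j else 0)"
      by (intro sum.cong refl) (auto simp: sum.delta')
    also have "\<dots> = (if j = m then a ^ (p - m) * d ^ m else 0)"
      by (simp add: sum.delta')
    finally show ?thesis .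
  qed
  have "tau p a 0 0 d f m = (\<Sum>j\<le>p. (if j = m then a ^ (p - m) * d ^ m else 0) * f j)"
    unfolding tau_def using True coefficient by (auto intro!: sum.cong)
  also have "\<dots> = (\<Sum>j\<le>p. if j = m then a ^ (p - m) * d ^ m * f m else 0)"
    by (intro sum.cong) auto
  also have "\<dots> = a ^ (p - m) * d ^ m * f m"
    using True by simp
  finally show ?thesis
    using True by simp
qed (simp add: tau_def)

lemma tau_in_Pspace: "tau p a b c d f \<in> Pspace p"
  by (simp add: Pspace_def tau_def)

lemma tauh_in_Pspace: "tauh h p \<eta> \<alpha> \<beta> f \<in> Pspace p"
  using tau_in_Pspace by (simp add: Pspace_def tauh_def)

lemma has_vector_derivative_cis_scaled:
  "((\<lambda>t. cis (c * t) * z) has_vector_derivative (\<i> * of_real c * z)) (at 0)"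
proof -
  have "((\<lambda>t. cis (c * t)) has_derivative (\<lambda>s. (c * s) *\<^sub>R (\<i> * cis (c * 0)))) (at 0)"
    by (intro has_derivative_cis has_derivative_mult_right has_derivative_ident)
  then have "((\<lambda>t. cis (c * t)) has_vector_derivative (\<i> * of_real c)) (at 0)"
    unfolding has_vector_derivative_def by (simp add: scaleR_conv_of_real algebra_simps)
  then show ?thesis
    by (intro has_vector_derivative_mult_left)
qed

lemma tau_differentiable:
  assumes "a differentiable (at 0)" "b differentiable (at 0)" "c differentiable (at 0)"
    "d differentiable (at 0)"
  shows "(\<lambda>t. tau p (a t) (b t) (c t) (d t) f m) differentiable (at (0::real))"
proof -
  have if_differentiable: "(\<lambda>t. if P then g t else 0) differentiable (at (0::real))"
    if "g differentiable (at 0)" for P and g :: "real \<Rightarrow> complex"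
    using that by (cases P) simp_all
  show ?thesis
    unfolding tau_def using assms
    by (intro if_differentiable differentiable_sum ballI differentiable_mult differentiable_power
        differentiable_const finite_atMost) simp_all
qed

lemma tauh_differentiable:
  fixes \<alpha> \<beta> :: "real \<Rightarrow> complex"
  assumes "\<alpha> differentiable (at 0)" "\<beta> differentiable (at 0)"
  shows "(\<lambda>t. tauh h p 1 (\<alpha> t) (\<beta> t) f m) differentiable (at 0)"
proof -
  have cnj_differentiable: "(\<lambda>t. cnj (\<gamma> t)) differentiable (at 0)"
    if "\<gamma> differentiable (at 0)" for \<gamma> :: "real \<Rightarrow> complex"
    using that vector_derivative_works has_vector_derivative_cnj differentiableI_vector by blast
  show ?thesis
    unfolding tauh_def using assms
    by (simp add: tau_differentiable cnj_differentiable differentiable_minus)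
qed

lemma tauh_kcurve0_derivative:
  assumes "f \<in> Pspace p"
  shows "((\<lambda>t. tauh h p (cis t) 1 0 f m) has_vector_derivative (- \<i> * of_int h * f m)) (at 0)"
proof -
  have "tauh h p (cis t) 1 0 f m = cis (of_int (- h) * t) * f m" for t
    using assms by (simp add: tauh_def tau_diagonal cis_power_int Pspace_def)
  then show ?thesis
    using has_vector_derivative_cis_scaled[of "of_int (- h)" "f m"] by simp
qed

lemma tauh_kcurve1_derivative:
  assumes "f \<in> Pspace p"
  shows "((\<lambda>t. tauh h p 1 (cis t) 0 f m) has_vector_derivative (\<i> * (of_nat p - 2 * of_nat m) * f m)) (at 0)"
proof (cases "m \<le> p")
  case True
  have "tauh h p 1 (cis t) 0 f m = cis ((real (p - m) - real m) * t) * f m" for t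
  proof -
    have "cis t ^ (p - m) * cnj (cis t) ^ m = cis (real (p - m) * t + real m * - t)"
      by (simp only: cis_cnj Complex.DeMoivre cis_mult)
    also have "\<dots> = cis ((real (p - m) - real m) * t)"
      by (simp add: algebra_simps)
    finally have "cis t ^ (p - m) * cnj (cis t) ^ m = cis ((real (p - m) - real m) * t)" .
    then show ?thesis
      using True by (simp add: tauh_def tau_diagonal)
  qed
  then show ?thesis
    using has_vector_derivative_cis_scaled[of "real (p - m) - real m" "f m"] True
    by (simp add: of_nat_diff)
next
  case False
  then show ?thesis
    using assms by (simp add: tauh_def tau_def Pspace_def)
qed

definition monomial :: "nat \<Rightarrow> nat \<Rightarrow> complex" where
  "monomial m = (\<lambda>j. if j = m then 1 else 0)"

lemma monomial_in_Pspace: "m \<le> p \<Longrightarrow> monomial m \<in> Pspace p"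
  by (simp add: monomial_def Pspace_def)

lemma sin_differentiable: "(\<lambda>t. complex_of_real (sin t)) differentiable (at x)"
  by (rule differentiableI_vector, rule has_vector_derivative_of_real, rule DERIV_sin)

lemma cos_differentiable: "(\<lambda>t. complex_of_real (cos t)) differentiable (at x)"
  by (rule differentiableI_vector, rule has_vector_derivative_of_real, rule DERIV_cos)

locale tau_intertwiner = gK_rep sc rho piK
  for sc :: "complex \<Rightarrow> 'v::ab_group_add \<Rightarrow> 'v" and rho piK +
  fixes h :: int and p :: nat and \<phi> :: "(nat \<Rightarrow> complex) \<Rightarrow> 'v"
  assumes phi_add: "f \<in> Pspace p \<Longrightarrow> g \<in> Pspace p \<Longrightarrow> \<phi> (\<lambda>j. f j + g j) = \<phi> f + \<phi> g"
    and phi_scale: "f \<in> Pspace p \<Longrightarrow> \<phi> (\<lambda>j. c * f j) = sc c (\<phi> f)"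
    and phi_equivariant:
      "(\<eta>, \<alpha>, \<beta>) \<in> Kpar \<Longrightarrow> f \<in> Pspace p \<Longrightarrow> \<phi> (tauh h p \<eta> \<alpha> \<beta> f) = piK (kmat \<eta> \<alpha> \<beta>) (\<phi> f)"
begin

lemma phi_zero: "\<phi> (\<lambda>j. 0) = 0"
  using phi_scale[of "\<lambda>j. 0" 0] by (simp add: Pspace_def)

lemma phi_sum:
  assumes "\<And>i. i \<in> I \<Longrightarrow> F i \<in> Pspace p"
  shows "\<phi> (\<lambda>j. \<Sum>i\<in>I. F i j) = (\<Sum>i\<in>I. \<phi> (F i))"
  using assms
proof (induction I rule: infinite_finite_induct)
  case (insert i I)
  have "(\<lambda>j. \<Sum>i\<in>I. F i j) \<in> Pspace p"
    using insert.prems by (simp add: Pspace_def)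
  with insert show ?case
    by (simp add: phi_add)
qed (simp_all add: phi_zero)

lemma phi_monomial_expansion:
  assumes "f \<in> Pspace p"
  shows "\<phi> f = (\<Sum>m\<le>p. sc (f m) (\<phi> (monomial m)))"
proof -
  have f_eq: "(\<lambda>j. \<Sum>m\<le>p. f m * monomial m j) = f"
  proof
    fix j
    have "(\<Sum>m\<le>p. f m * monomial m j) = (\<Sum>m\<le>p. if m = j then f j else 0)"
      by (intro sum.cong) (auto simp: monomial_def)
    then show "(\<Sum>m\<le>p. f m * monomial m j) = f j"
      using assms by (auto simp: Pspace_def)
  qed
  have "\<phi> (\<lambda>j. \<Sum>m\<le>p. f m * monomial m j) = (\<Sum>m\<le>p. \<phi> (\<lambda>j. f m * monomial m j))"
    by (rule phi_sum) (auto simp: Pspace_def monomial_def)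
  also have "\<dots> = (\<Sum>m\<le>p. sc (f m) (\<phi> (monomial m)))"
    by (intro sum.cong refl) (simp add: phi_scale monomial_in_Pspace)
  finally show ?thesis
    by (simp only: f_eq)
qed

lemma rho_ktangent_phi:
  assumes "f \<in> Pspace p" "n < 4"
    and curve: "\<And>t. (E t, A t, B t) \<in> Kpar" "\<And>t. kcurve n t = kmat (E t) (A t) (B t)"
    and coefficient_derivative:
      "\<And>m. m \<le> p \<Longrightarrow> ((\<lambda>t. tauh h p (E t) (A t) (B t) f m) has_vector_derivative g' m) (at 0)"
  shows "rho (ktangent n) (\<phi> f) = (\<Sum>m\<le>p. sc (g' m) (\<phi> (monomial m)))"
proof (rule rho_ktangent_derivative[OF \<open>n < 4\<close> finite_atMost _ coefficient_derivative])
  fix t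
  have "piK (kcurve n t) (\<phi> f) = \<phi> (tauh h p (E t) (A t) (B t) f)"
    using phi_equivariant[OF curve(1) \<open>f \<in> Pspace p\<close>] by (simp add: curve(2))
  also have "\<dots> = (\<Sum>m\<le>p. sc (tauh h p (E t) (A t) (B t) f m) (\<phi> (monomial m)))"
    by (rule phi_monomial_expansion[OF tauh_in_Pspace])
  finally show "piK (kcurve n t) (\<phi> f) = (\<Sum>m\<le>p. sc (tauh h p (E t) (A t) (B t) f m) (\<phi> (monomial m)))" .
qed simp

lemma CKi_phi:
  assumes "f \<in> Pspace p"
  shows "rho CKi (\<phi> f) = sc (- \<i> * of_int h) (\<phi> f)"
proof -
  have "rho (ktangent 0) (\<phi> f) = (\<Sum>m\<le>p. sc (- \<i> * of_int h * f m) (\<phi> (monomial m)))"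
    using tauh_kcurve0_derivative[OF assms]
    by (intro rho_ktangent_phi[OF assms, of 0 "\<lambda>t. cis t" "\<lambda>t. 1" "\<lambda>t. 0"])
      (auto simp: Kpar_def kcurve_def)
  also have "\<dots> = sc (- \<i> * of_int h) (\<phi> f)"
    by (simp add: phi_monomial_expansion[OF assms] V.scale_sum_right)
  finally show ?thesis
    by (simp add: ktangent_def)
qed

lemma W0_phi_monomial:
  assumes "m \<le> p"
  shows "rho W0 (\<phi> (monomial m)) = sc (\<i> * (of_nat p - 2 * of_nat m)) (\<phi> (monomial m))"
proof -
  have "rho (ktangent 1) (\<phi> (monomial m))
      = (\<Sum>j\<le>p. sc (\<i> * (of_nat p - 2 * of_nat j) * monomial m j) (\<phi> (monomial j)))"
    using tauh_kcurve1_derivative[OF monomial_in_Pspace[OF assms]]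
    by (intro rho_ktangent_phi[OF monomial_in_Pspace[OF assms], of 1 "\<lambda>t. 1" "\<lambda>t. cis t" "\<lambda>t. 0"])
      (auto simp: Kpar_def kcurve_def)
  also have "\<dots> = (\<Sum>j\<le>p. if j = m then sc (\<i> * (of_nat p - 2 * of_nat m)) (\<phi> (monomial m)) else 0)"
    by (intro sum.cong) (auto simp: monomial_def)
  also have "\<dots> = sc (\<i> * (of_nat p - 2 * of_nat m)) (\<phi> (monomial m))"
    using assms by simp
  finally show ?thesis
    by (simp add: ktangent_def)
qed

lemma rotation_ktangent_phi_in_span:
  assumes "f \<in> Pspace p" "n = 2 \<or> n = 3"
  shows "rho (ktangent n) (\<phi> f) \<in> V.span (\<phi> ` Pspace p)"
proof -
  obtain B where curve: "\<And>t. (1, complex_of_real (cos t), B t) \<in> Kpar"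
    "\<And>t. kcurve n t = kmat 1 (complex_of_real (cos t)) (B t)" and "B differentiable (at 0)"
  proof (cases "n = 2")
    case True
    show ?thesis
      by (rule that[of "\<lambda>t. complex_of_real (sin t)"])
        (simp_all add: Kpar_def kcurve_def True sin_differentiable)
  next
    case False
    with assms(2) show ?thesis
      by (intro that[of "\<lambda>t. \<i> * complex_of_real (sin t)"])
        (auto simp: Kpar_def kcurve_def norm_mult sin_differentiable)
  qed
  have "(\<lambda>t. tauh h p 1 (complex_of_real (cos t)) (B t) f m) differentiable (at 0)" for m
    by (rule tauh_differentiable[OF cos_differentiable \<open>B differentiable (at 0)\<close>])
  then have "rho (ktangent n) (\<phi> f)
      = (\<Sum>m\<le>p. sc (vector_derivative (\<lambda>t. tauh h p 1 (complex_of_real (cos t)) (B t) f m) (at 0))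
          (\<phi> (monomial m)))"
    using assms by (intro rho_ktangent_phi[OF _ _ curve]) (auto simp: vector_derivative_works)
  also have "\<dots> \<in> V.span (\<phi> ` Pspace p)"
    by (intro V.span_sum V.span_scale V.span_base imageI monomial_in_Pspace) simp
  finally show ?thesis .
qed

end

section \<open>The isotypic component V_{h,p}\<close>

primrec shifted_product ::
  "('a \<Rightarrow> 'v \<Rightarrow> 'v) \<Rightarrow> ('v \<Rightarrow> 'v) \<Rightarrow> (nat \<Rightarrow> 'a) \<Rightarrow> nat \<Rightarrow> 'v \<Rightarrow> 'v::ab_group_add" where
  "shifted_product s T c 0 x = x"
| "shifted_product s T c (Suc k) x =
     T (shifted_product s T c k x) - s (c k) (shifted_product s T c k x)"

context vector_space
begin

interpretation endo: vector_space_pair scale scale ..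

lemma shifted_product_linear:
  assumes "Vector_Spaces.linear scale scale T"
  shows "Vector_Spaces.linear scale scale (shifted_product scale T c k)"
proof (induction k)
  case 0
  have "shifted_product scale T c 0 = id"
    by (simp add: fun_eq_iff)
  then show ?case
    by (simp only: linear_id)
next
  case (Suc k)
  let ?F = "shifted_product scale T c k"
  have "shifted_product scale T c (Suc k) = (\<lambda>x. (T \<circ> ?F) x - scale (c k) (?F x))"
    by (simp add: fun_eq_iff)
  moreover have "Vector_Spaces.linear scale scale (T \<circ> ?F)"
    using Suc.IH assms by (rule Vector_Spaces.linear_compose)
  ultimately show ?case
    using Suc.IH by (simp only: endo.linear_compose_sub endo.linear_compose_scale_right)
qed

lemma shifted_product_eigenvector:
  assumes "Vector_Spaces.linear scale scale T" "T x = scale \<mu> x"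
  shows "shifted_product scale T c k x = scale (\<Prod>j<k. \<mu> - c j) x"
proof (induction k)
  case (Suc k)
  let ?P = "\<Prod>j<k. \<mu> - c j"
  have "shifted_product scale T c (Suc k) x = T (scale ?P x) - scale (c k) (scale ?P x)"
    by (simp add: Suc.IH)
  also have "\<dots> = scale (?P * \<mu> - c k * ?P) x"
    using endo.linear_scale[OF assms(1)] assms(2) by (simp add: scale_left_diff_distrib)
  also have "?P * \<mu> - c k * ?P = (\<Prod>j<Suc k. \<mu> - c j)"
    by (simp add: algebra_simps)
  finally show ?case .
qed simp

end

context gK_rep
begin

lemma tau_copyE:
  assumes "tau_copy sc piK h p U"
  obtains \<phi> where "\<phi> ` Pspace p = U" "tau_intertwiner sc rho piK h p \<phi>"
proof -
  obtain \<phi> where "bij_betw \<phi> (Pspace p) U"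
    and "\<forall>f\<in>Pspace p. \<forall>g\<in>Pspace p. \<phi> (\<lambda>j. f j + g j) = \<phi> f + \<phi> g"
    and "\<forall>f\<in>Pspace p. \<forall>c. \<phi> (\<lambda>j. c * f j) = sc c (\<phi> f)"
    and "\<forall>(\<eta>, \<alpha>, \<beta>)\<in>Kpar. \<forall>f\<in>Pspace p. \<phi> (tauh h p \<eta> \<alpha> \<beta> f) = piK (kmat \<eta> \<alpha> \<beta>) (\<phi> f)"
    using assms unfolding tau_copy_def by blast
  moreover from this have "tau_intertwiner sc rho piK h p \<phi>"
    by unfold_locales (use gK_module in auto)
  ultimately show thesis
    by (intro that) (simp_all add: bij_betw_def)
qed

lemma Viso_subset:
  assumes "V.subspace S"
    and "\<And>\<phi>. tau_intertwiner sc rho piK h p \<phi> \<Longrightarrow> \<phi> ` Pspace p \<subseteq> Viso sc piK h p \<Longrightarrow> \<phi> ` Pspace p \<subseteq> S"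
  shows "Viso sc piK h p \<subseteq> S"
  unfolding Viso_def
proof (rule V.span_minimal[OF _ assms(1)])
  show "\<Union>{U. tau_copy sc piK h p U} \<subseteq> S"
  proof
    fix x
    assume "x \<in> \<Union>{U. tau_copy sc piK h p U}"
    then obtain U where U: "tau_copy sc piK h p U" "x \<in> U"
      by blast
    from U(1) obtain \<phi> where "\<phi> ` Pspace p = U" "tau_intertwiner sc rho piK h p \<phi>"
      by (rule tau_copyE)
    moreover have "U \<subseteq> Viso sc piK h p"
      using U(1) by (auto simp: Viso_def intro: V.span_base)
    ultimately show "x \<in> S"
      using assms(2) U(2) by blast
  qed
qed

lemma eigenspace_subspace:
  assumes "X \<in> sl3"
  shows "V.subspace {x. rho X x = sc c x}"
proof (rule V.subspaceI)
  show "0 \<in> {x. rho X x = sc c x}"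
    using rho_zero[OF assms] by simp
  show "x + y \<in> {x. rho X x = sc c x}" if "x \<in> {x. rho X x = sc c x}" "y \<in> {x. rho X x = sc c x}" for x y
    using that rho_add[OF assms] by (simp add: V.scale_right_distrib)
  show "sc a x \<in> {x. rho X x = sc c x}" if "x \<in> {x. rho X x = sc c x}" for a x
    using that rho_scale[OF assms] by (simp add: mult.commute)
qed

lemma Viso_CKi:
  assumes "x \<in> Viso sc piK h p"
  shows "rho CKi x = sc (- \<i> * of_int h) x"
proof -
  have "Viso sc piK h p \<subseteq> {x. rho CKi x = sc (- \<i> * of_int h) x}"
  proof (rule Viso_subset)
    show "V.subspace {x. rho CKi x = sc (- \<i> * of_int h) x}"
      by (rule eigenspace_subspace) simp
  qed (auto simp: tau_intertwiner.CKi_phi)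
  with assms show ?thesis
    by blast
qed

lemma Viso_rotation_ktangent:
  assumes "n = 2 \<or> n = 3" "x \<in> Viso sc piK h p"
  shows "rho (ktangent n) x \<in> Viso sc piK h p"
proof -
  have "Viso sc piK h p \<subseteq> {x. rho (ktangent n) x \<in> Viso sc piK h p}"
  proof (rule Viso_subset)
    show "V.subspace {x. rho (ktangent n) x \<in> Viso sc piK h p}"
      using Vpair.linear_subspace_vimage[OF rho_linear[OF ktangent_sl3], of "Viso sc piK h p"]
      by (simp add: Viso_def V.subspace_span vimage_def)
    fix \<phi>
    assume \<phi>: "tau_intertwiner sc rho piK h p \<phi>" and "\<phi> ` Pspace p \<subseteq> Viso sc piK h p"
    from this(2) have "V.span (\<phi> ` Pspace p) \<subseteq> Viso sc piK h p"
      unfolding Viso_def by (rule V.span_minimal[OF _ V.subspace_span])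
    then show "\<phi> ` Pspace p \<subseteq> {x. rho (ktangent n) x \<in> Viso sc piK h p}"
      using tau_intertwiner.rotation_ktangent_phi_in_span[OF \<phi> _ assms(1)] by blast
  qed
  with assms(2) show ?thesis
    by blast
qed

lemma Viso_Z21: "x \<in> Viso sc piK h p \<Longrightarrow> rho Z21 x \<in> Viso sc piK h p"
  using Viso_rotation_ktangent[of 2 x] Viso_rotation_ktangent[of 3 x]
  by (simp add: Z21_eq_ktangent rho_plus rho_cscale Viso_def V.span_add V.span_scale)

lemma Viso_W0_annihilated:
  assumes "x \<in> Viso sc piK h p"
  shows "shifted_product sc (rho W0) (\<lambda>j. \<i> * (of_nat p - 2 * of_nat j)) (Suc p) x = 0"
proof -
  define L where "L = shifted_product sc (rho W0) (\<lambda>j. \<i> * (of_nat p - 2 * of_nat j)) (Suc p)"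
  have L: "Vector_Spaces.linear sc sc L"
    by (simp add: L_def V.shifted_product_linear rho_linear)
  have monomial_killed: "L (\<phi> (monomial m)) = 0"
    if "tau_intertwiner sc rho piK h p \<phi>" "m \<le> p" for \<phi> m
  proof -
    have "L (\<phi> (monomial m))
        = sc (\<Prod>j<Suc p. \<i> * (of_nat p - 2 * of_nat m) - \<i> * (of_nat p - 2 * of_nat j)) (\<phi> (monomial m))"
      unfolding L_def
      by (rule V.shifted_product_eigenvector[OF rho_linear tau_intertwiner.W0_phi_monomial[OF that]]) simp
    also have "(\<Prod>j<Suc p. \<i> * (of_nat p - 2 * of_nat m) - \<i> * (of_nat p - 2 * of_nat j)) = 0"
      using \<open>m \<le> p\<close> by (intro prod_zero) (auto intro: bexI[of _ m])
    finally show ?thesis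
      by simp
  qed
  have "Viso sc piK h p \<subseteq> {x. L x = 0}"
  proof (rule Viso_subset)
    show "V.subspace {x. L x = 0}"
      by (rule Vpair.linear_subspace_kernel[OF L])
    fix \<phi>
    assume \<phi>: "tau_intertwiner sc rho piK h p \<phi>"
    show "\<phi> ` Pspace p \<subseteq> {x. L x = 0}"
      using monomial_killed[OF \<phi>]
      by (auto simp: tau_intertwiner.phi_monomial_expansion[OF \<phi>] Vpair.linear_sum[OF L] Vpair.linear_scale[OF L])
  qed
  with assms show ?thesis
    unfolding L_def by blast
qed

text \<open>\<open>Z21 x\<close> has \<open>W0\<close>-eigenvalue \<open>-i(p+2)\<close>, which is not among the roots \<open>i(p-2j)\<close>, \<open>j \<le> p\<close>, of
  the polynomial annihilating \<open>W0\<close> on \<open>V_{h,p}\<close>.\<close>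

lemma Z21_annihilates_lowest_weight:
  assumes "x \<in> Viso sc piK h p" "rho W0 x = sc (- \<i> * of_nat p) x"
  shows "rho Z21 x = 0"
proof -
  have W0_Z21: "rho W0 (rho Z21 x) = sc (- \<i> * of_nat p + - 2 * \<i>) (rho Z21 x)"
    by (rule rho_eigen_shift[OF _ _ commutator_W0_Z21 assms(2)]) simp_all
  have "(\<Prod>j<Suc p. (- \<i> * of_nat p + - 2 * \<i>) - \<i> * (of_nat p - 2 * of_nat j)) \<noteq> 0"
  proof -
    have "(- \<i> * of_nat p + - 2 * \<i>) - \<i> * (of_nat p - 2 * of_nat j) = - 2 * \<i> * (of_nat (Suc p) - of_nat j)"
      for j
      by (simp add: algebra_simps)
    moreover have "(of_nat (Suc p) :: complex) \<noteq> of_nat j" if "j < Suc p" for j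
      using that by (simp only: of_nat_eq_iff)
    ultimately show ?thesis
      by simp
  qed
  moreover have "sc (\<Prod>j<Suc p. (- \<i> * of_nat p + - 2 * \<i>) - \<i> * (of_nat p - 2 * of_nat j)) (rho Z21 x) = 0"
    using Viso_W0_annihilated[OF Viso_Z21[OF assms(1)]]
    by (simp only: V.shifted_product_eigenvector[OF rho_linear[OF generators_sl3(2)] W0_Z21])
  ultimately show ?thesis
    by simp
qed

end

theorem lemma6p4:
  fixes sc :: "complex \<Rightarrow> 'v::ab_group_add \<Rightarrow> 'v"
    and rho piK :: "cmat \<Rightarrow> 'v \<Rightarrow> 'v"
    and h :: int and p :: nat and v :: 'v
  assumes "gK_module sc rho piK"
    and "even (h - int p)"
    and "minimal_vector sc rho piK h p v"
  shows "(sc (2 * (of_nat p + 1)) (rho Z32 v) = - rho Z12 (rho Z31 v)) \<and>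
         (sc (2 * (of_nat p + 1)) (rho Z13 v) = rho Z12 (rho Z23 v)) \<and>
         (Sm3m1 sc rho (p + 1) (S3p1 rho v) - sc (of_nat p + 1) (S3m1 sc rho (p + 1) (Sm3p1 rho v))
           = sc ((of_nat p - of_int h) * (of_nat p + 1) / 2) v) \<and>
         (Cop sc rho v = sc ((of_int h)^2 / 3 + (of_nat p)^2 + 2 * of_int h + 2 * of_nat p) v
           + sc (4 * (of_nat p + 2) / (of_nat p + 1)) (Sm3m1 sc rho (p + 1) (S3p1 rho v))) \<and>
         (Delta3 sc rho v = sc (of_int h * (of_int h + 3 * of_nat p + 12) * (of_int h - 3 * of_nat p + 6) / 9) v
           + sc (2 * (of_nat p + 2) * (of_int h - 3 * of_nat p + 6) / (of_nat p + 1)) (Sm3m1 sc rho (p + 1) (S3p1 rho v)))"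
proof -
  interpret gK_rep sc rho piK
    by (rule gK_rep.intro) (fact assms(1))
  have v: "v \<in> Viso sc piK h p" "rho W0 v = sc (- \<i> * of_nat p) v"
    "S3m1 sc rho p v = 0" "Sm3m1 sc rho p v = 0"
    using assms(3) unfolding minimal_vector_def Vhpp_def by auto
  interpret minimal_weight_vector sc rho h p v
    using v by unfold_locales (simp_all add: Viso_CKi Z21_annihilates_lowest_weight)
  show ?thesis
    using Z32_v_relation Z13_v_relation shift_operator_relation Cop_minimal_vector Delta3_minimal_vector
    by blast
qed

end
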